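(* The winding fraction satisfies: (a) $\mathrm{wf}(\overrightarrow G)>0$ if and only if $\overrightarrow G$ has a directed cycle. (b) If there is a cyclic homomorphism $\overrightarrow G\to\overrightarrow H$ then $\mathrm{wf}(\overrightarrow G)\le\mathrm{wf}(\overrightarrow H)$. (c) If $X\subseteq S^1$ is finite and $0<r<\frac12$ then $\mathrm{wf}_{\le}(X;r)\le r$, $\mathrm{wf}_{<}(X;r)<r$, and $\mathrm{wf}_{<}(X;r)\le\mathrm{wf}_{\le}(X;r)$. (d) $\mathrm{wf}(\overrightarrow{C_n^k})=\frac kn$ for all integers $0\le k<\frac n2$.
   Context: A directed graph is a finite pair $(V,E)$, $E\subseteq V\times V$, with no loops and never both $(v,w),(w,v)\in E$; write $v\to w$. A directed cycle is a sequence $v_1,\dots,v_s$ with $v_i\to v_{i+1}$ (indices mod $s$). A cyclic graph is a directed graph with a cyclic vertex order $v_0\prec\cdots\prec v_{n-1}$ (indices mod $n$) such that $v_i\to v_j$ implies $j=i+1$ or both $v_i\to v_{j-1}$ and $v_{i+1}\to v_j$. For three elements of a cyclic order $x_0\prec\cdots\prec x_{n-1}$, $x_i\prec x_j\prec x_k$ means $i<j<k$ or $k<i<j$ or $j<k<i$; subintervals are $\emptyset$, $\{x_i,\dots,x_j\}$ ($i\le j$) and $\{x_j,\dots,x_{n-1},x_0,\dots,x_i\}$ ($i<j$). A map $f$ is cyclic monotone if its fibres are subintervals and $f(s)\prec f(s')\prec f(s'')$ implies $s\prec s'\prec s''$. A cyclic homomorphism of cyclic graphs is a cyclic monotone vertex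 map $f$ such that each edge $v\to w$ has $f(v)=f(w)$ or $f(v)\to f(w)$, and $f$ is non-constant if the source has a directed cycle. $\overrightarrow{C_n^k}$ ($0\le k<n/2$): vertices $\{0,\dots,n-1\}$, $i\to j$ iff $0<(j-i)\bmod n\le k$. $\mathrm{wf}(\overrightarrow G)=\sup\{k/n:\exists\text{ cyclic homomorphism }\overrightarrow{C_n^k}\to\overrightarrow G\}$. $S^1$ is the circle of circumference $1$ with points in $[0,1)$ and clockwise distance $\vec d(x,y)$; for finite $X\subseteq S^1$ and $0<r<\frac12$, $\overrightarrow{\mathbf{VR}}_{\le}(X;r)$ (resp. $\overrightarrow{\mathbf{VR}}_{<}(X;r)$) is the directed graph on $X$ with $x_1\to x_2$ iff $0<\vec d(x_1,x_2)\le r$ (resp. $<r$), cyclic with respect to the clockwise order; $\mathrm{wf}_{\le}(X;r)$ and $\mathrm{wf}_{<}(X;r)$ are their winding fractions. *)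

theory Defs
  imports Complex_Main
begin

text \<open>A finite directed graph with a cyclic vertex order is represented by its number
  of vertices n; the vertices are 0,...,n-1, listed in their cyclic order
  v_0 < v_1 < ... < v_(n-1) (indices mod n).  E i j means v_i \<rightarrow> v_j.\<close>

definition directed_graph :: "nat \<Rightarrow> (nat \<Rightarrow> nat \<Rightarrow> bool) \<Rightarrow> bool" where
  "directed_graph n E \<longleftrightarrow>
     (\<forall>i j. E i j \<longrightarrow> i < n \<and> j < n) \<and> (\<forall>i. \<not> E i i) \<and> (\<forall>i j. E i j \<longrightarrow> \<not> E j i)"

definition cyclic_graph :: "nat \<Rightarrow> (nat \<Rightarrow> nat \<Rightarrow> bool) \<Rightarrow> bool" where
  "cyclic_graph n E \<longleftrightarrow> directed_graph n E \<and>
     (\<forall>i j. E i j \<longrightarrow> j = (i + 1) mod n \<or>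
                        (E i ((j + n - 1) mod n) \<and> E ((i + 1) mod n) j))"

definition has_dcycle :: "nat \<Rightarrow> (nat \<Rightarrow> nat \<Rightarrow> bool) \<Rightarrow> bool" where
  "has_dcycle n E \<longleftrightarrow>
     (\<exists>s::nat. \<exists>v::nat \<Rightarrow> nat. s > 0 \<and> (\<forall>i<s. v i < n \<and> E (v i) (v ((i + 1) mod s))))"

definition cbetw :: "nat \<Rightarrow> nat \<Rightarrow> nat \<Rightarrow> bool" where
  "cbetw i j k \<longleftrightarrow> (i < j \<and> j < k) \<or> (k < i \<and> i < j) \<or> (j < k \<and> k < i)"

definition subinterval :: "nat \<Rightarrow> nat set \<Rightarrow> bool" where
  "subinterval n A \<longleftrightarrow> A = {} \<or>
     (\<exists>i j. i \<le> j \<and> j < n \<and> A = {i..j}) \<or>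
     (\<exists>i j. i < j \<and> j < n \<and> A = {j..<n} \<union> {0..i})"

definition cyclic_monotone :: "nat \<Rightarrow> nat \<Rightarrow> (nat \<Rightarrow> nat) \<Rightarrow> bool" where
  "cyclic_monotone n m f \<longleftrightarrow>
     (\<forall>y<m. subinterval n {x. x < n \<and> f x = y}) \<and>
     (\<forall>s<n. \<forall>s'<n. \<forall>s''<n. cbetw (f s) (f s') (f s'') \<longrightarrow> cbetw s s' s'')"

definition cyclic_hom :: "nat \<Rightarrow> (nat \<Rightarrow> nat \<Rightarrow> bool) \<Rightarrow> nat \<Rightarrow> (nat \<Rightarrow> nat \<Rightarrow> bool)
                          \<Rightarrow> (nat \<Rightarrow> nat) \<Rightarrow> bool" where
  "cyclic_hom n E m F f \<longleftrightarrow>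
     (\<forall>x<n. f x < m) \<and> cyclic_monotone n m f \<and>
     (\<forall>v w. E v w \<longrightarrow> f v = f w \<or> F (f v) (f w)) \<and>
     (has_dcycle n E \<longrightarrow> (\<exists>a<n. \<exists>b<n. f a \<noteq> f b))"

definition Cnk :: "nat \<Rightarrow> nat \<Rightarrow> nat \<Rightarrow> nat \<Rightarrow> bool" where
  "Cnk n k i j \<longleftrightarrow> i < n \<and> j < n \<and>
     0 < (int j - int i) mod int n \<and> (int j - int i) mod int n \<le> int k"

text \<open>Winding fraction; the 0 added to the set only matters for the empty graph
  (where the supremum would be over the empty set).\<close>
definition wf :: "nat \<Rightarrow> (nat \<Rightarrow> nat \<Rightarrow> bool) \<Rightarrow> real" where
  "wf m F = Sup ({real k / real n | n k. 2 * k < n \<and> (\<exists>f. cyclic_hom n (Cnk n k) m F f)} \<union> {0})"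

text \<open>Circle S^1 = [0,1); clockwise distance from x to y is (y - x) mod 1.\<close>
definition cw_dist :: "real \<Rightarrow> real \<Rightarrow> real" where
  "cw_dist x y = frac (y - x)"

text \<open>Vietoris-Rips graphs on a finite X \<subseteq> [0,1); vertex i is the i-th element of X
  in increasing (= clockwise) order.\<close>
definition VR_le :: "real set \<Rightarrow> real \<Rightarrow> nat \<Rightarrow> nat \<Rightarrow> bool" where
  "VR_le X r i j \<longleftrightarrow> i < card X \<and> j < card X \<and>
     0 < cw_dist (sorted_list_of_set X ! i) (sorted_list_of_set X ! j) \<and>
     cw_dist (sorted_list_of_set X ! i) (sorted_list_of_set X ! j) \<le> r"

definition VR_lt :: "real set \<Rightarrow> real \<Rightarrow> nat \<Rightarrow> nat \<Rightarrow> bool" where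
  "VR_lt X r i j \<longleftrightarrow> i < card X \<and> j < card X \<and>
     0 < cw_dist (sorted_list_of_set X ! i) (sorted_list_of_set X ! j) \<and>
     cw_dist (sorted_list_of_set X ! i) (sorted_list_of_set X ! j) < r"

definition wf_le :: "real set \<Rightarrow> real \<Rightarrow> real" where
  "wf_le X r = wf (card X) (VR_le X r)"

definition wf_lt :: "real set \<Rightarrow> real \<Rightarrow> real" where
  "wf_lt X r = wf (card X) (VR_lt X r)"

end

theory Submission
  imports Defs
begin

text \<open>Place the vertices of a graph on the circle. A cyclic homomorphism from C_n^k into a
  graph whose edges have clockwise length at most \<rho> < 1/2 yields an n-periodic sequence of
  points in which any k consecutive steps advance by at most \<rho> in total, so they never wrap
  around. The clockwise increments over one period add up to a positive integer, the winding
  number W, and every increment lies in k such windows; hence k \<le> k W \<le> n \<rho>. This bounds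
  the winding fraction of Vietoris-Rips graphs and of C_n^k itself (vertices at i/n).

  In a cyclic graph an edge a \<rightarrow> b yields a \<rightarrow> w \<rightarrow> b for every w strictly inside its
  clockwise arc. A nontrivial closed walk sweeps over every vertex, so a directed cycle forces
  all edges v_i \<rightarrow> v_(i+1); this gives (a) via the identity map C_n^1 \<rightarrow> G. For (b), cyclic
  homomorphisms compose because preimages of subintervals under cyclic monotone maps are
  subintervals, and a homomorphism that is not constant cannot collapse a closed walk.\<close>

section \<open>Clockwise steps between vertices\<close>

definition cw_steps :: "nat \<Rightarrow> nat \<Rightarrow> nat \<Rightarrow> nat" where
  "cw_steps n a b = (if a \<le> b then b - a else b + n - a)"

definition cyc_succ :: "nat \<Rightarrow> nat \<Rightarrow> nat" where
  "cyc_succ n a = (if a + 1 = n then 0 else a + 1)"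

definition cyc_pred :: "nat \<Rightarrow> nat \<Rightarrow> nat" where
  "cyc_pred n b = (if b = 0 then n - 1 else b - 1)"

lemma cyc_succ_eq_mod: "a < n \<Longrightarrow> cyc_succ n a = (a + 1) mod n"
  by (auto simp: cyc_succ_def)

lemma cyc_pred_eq_mod:
  assumes "b < n" shows "cyc_pred n b = (b + n - 1) mod n"
proof (cases "b = 0")
  case False
  then have "b + n - 1 = (b - 1) + n" by simp
  then have "(b + n - 1) mod n = (b - 1) mod n" by simp
  then show ?thesis using False assms by (simp add: cyc_pred_def)
qed (use assms in \<open>simp add: cyc_pred_def\<close>)

lemma cw_steps_self [simp]: "cw_steps n a a = 0"
  by (simp add: cw_steps_def)

lemma cw_steps_swap: "a < n \<Longrightarrow> b < n \<Longrightarrow> a \<noteq> b \<Longrightarrow> cw_steps n a b + cw_steps n b a = n"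
  by (auto simp: cw_steps_def)

lemma cw_steps_less: "a < n \<Longrightarrow> b < n \<Longrightarrow> cw_steps n a b < n"
  by (auto simp: cw_steps_def)

lemma cw_steps_eq_0_iff: "a < n \<Longrightarrow> b < n \<Longrightarrow> cw_steps n a b = 0 \<longleftrightarrow> a = b"
  by (auto simp: cw_steps_def)

lemma cw_steps_int_mod:
  assumes "a < n" "b < n" shows "(int b - int a) mod int n = int (cw_steps n a b)"
proof (cases "a \<le> b")
  case False
  have "(int b - int a) mod int n = (int b - int a + int n) mod int n" by simp
  also have "\<dots> = int b - int a + int n" using assms False by (intro mod_pos_pos_trivial) auto
  finally show ?thesis using assms False by (simp add: cw_steps_def of_nat_diff)
qed (use assms in \<open>simp add: cw_steps_def of_nat_diff\<close>)

lemma cw_steps_split: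
  "a < n \<Longrightarrow> b < n \<Longrightarrow> w < n \<Longrightarrow> cw_steps n a b \<le> cw_steps n a w \<Longrightarrow>
   cw_steps n b w = cw_steps n a w - cw_steps n a b"
  unfolding cw_steps_def by (cases "a \<le> b"; cases "a \<le> w"; cases "b \<le> w") simp_all

lemma cw_steps_mod_add:
  assumes "j < n" shows "cw_steps n (t mod n) ((t + j) mod n) = j"
proof -
  have tn: "t mod n < n" using assms by simp
  have shift: "(t + j) mod n = (t mod n + j) mod n" by (simp add: mod_add_left_eq)
  show ?thesis
  proof (cases "t mod n + j < n")
    case True
    then show ?thesis unfolding shift cw_steps_def by simp
  next
    case False
    then have "(t mod n + j) mod n = (t mod n + j - n) mod n"
      by (simp add: le_mod_geq)
    also have "\<dots> = t mod n + j - n" using tn assms by (intro mod_less) linarith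
    finally have "(t mod n + j) mod n = t mod n + j - n" .
    then show ?thesis unfolding shift cw_steps_def using False tn assms by auto
  qed
qed

lemma Cnk_iff_cw_steps: "Cnk n k i j \<longleftrightarrow> i < n \<and> j < n \<and> 0 < cw_steps n i j \<and> cw_steps n i j \<le> k"
  unfolding Cnk_def using cw_steps_int_mod by auto

lemma Cnk_mod_add:
  assumes "0 < j" "j \<le> k" "2 * k < n" shows "Cnk n k (t mod n) ((t + j) mod n)"
  using assms cw_steps_mod_add[of j n t] by (simp add: Cnk_iff_cw_steps)

lemma cw_dist_index:
  assumes "a < n" "b < n"
  shows "cw_dist (real a / real n) (real b / real n) = real (cw_steps n a b) / real n"
  unfolding cw_dist_def frac_unique_iff
proof (intro conjI)
  have n: "0 < real n" using assms by simp
  have "real b - real a - real (cw_steps n a b) \<in> {0, - real n}"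
    using assms by (auto simp: cw_steps_def)
  then have "real b / real n - real a / real n - real (cw_steps n a b) / real n \<in> {0, -1}"
    using n by (auto simp: diff_divide_distrib[symmetric])
  then show "real b / real n - real a / real n - real (cw_steps n a b) / real n \<in> \<int>"
    by auto
  show "real (cw_steps n a b) / real n < 1" using cw_steps_less[OF assms] n by simp
qed simp

section \<open>Cyclic graphs\<close>

lemma cyclic_graph_edgeD:
  "cyclic_graph n E \<Longrightarrow> E a b \<Longrightarrow> a < n \<and> b < n \<and> a \<noteq> b \<and> \<not> E b a"
  unfolding cyclic_graph_def directed_graph_def by metis

lemma cyclic_graph_edge_cases:
  assumes "cyclic_graph n E" "E a b"
  shows "b = cyc_succ n a \<or> (E a (cyc_pred n b) \<and> E (cyc_succ n a) b)"
  using assms cyclic_graph_edgeD[OF assms] cyc_succ_eq_mod cyc_pred_eq_mod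
  unfolding cyclic_graph_def by metis

lemma cyclic_graph_arc:
  assumes cg: "cyclic_graph n E" and e: "E a b" and w: "w < n"
    and inside: "0 < cw_steps n a w" "cw_steps n a w < cw_steps n a b"
  shows "E a w \<and> E w b"
  using e inside
proof (induction "cw_steps n a b" arbitrary: a b rule: less_induct)
  case less
  have ab: "a < n" "b < n" using cyclic_graph_edgeD[OF cg less.prems(1)] by auto
  have "b \<noteq> cyc_succ n a"
    using ab w less.prems(2,3) by (auto simp: cw_steps_def cyc_succ_def split: if_splits)
  then have e1: "E a (cyc_pred n b)" and e2: "E (cyc_succ n a) b"
    using cyclic_graph_edge_cases[OF cg less.prems(1)] by auto
  have shorter1: "cw_steps n a (cyc_pred n b) = cw_steps n a b - 1"
    and shorter2: "cw_steps n (cyc_succ n a) b = cw_steps n a b - 1"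
    and shift: "cw_steps n (cyc_succ n a) w = cw_steps n a w - 1"
    using ab w less.prems(2,3)
    by (auto simp: cw_steps_def cyc_pred_def cyc_succ_def split: if_splits)
  have "E a w"
  proof (cases "w = cyc_pred n b")
    case False
    then have "cw_steps n a w < cw_steps n a (cyc_pred n b)"
      using ab w less.prems(2,3) by (auto simp: cw_steps_def cyc_pred_def split: if_splits)
    then show ?thesis using less.hyps[OF _ e1] less.prems(2) shorter1 by auto
  qed (use e1 in simp)
  moreover have "E w b"
  proof (cases "w = cyc_succ n a")
    case False
    then have "0 < cw_steps n (cyc_succ n a) w"
      using ab w less.prems(2,3) by (auto simp: cw_steps_def cyc_succ_def split: if_splits)
    then show ?thesis using less.hyps[OF _ e2] less.prems(3) shorter2 shift by auto
  qed (use e2 in simp)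
  ultimately show ?case ..
qed

lemma cyclic_graph_succ_edge:
  assumes cg: "cyclic_graph n E" and e: "E a b" shows "E a (cyc_succ n a)"
proof (cases "b = cyc_succ n a")
  case False
  have ab: "a < n" "b < n" "a \<noteq> b" using cyclic_graph_edgeD[OF cg e] by auto
  then have "cyc_succ n a < n" "0 < cw_steps n a (cyc_succ n a)"
    "cw_steps n a (cyc_succ n a) < cw_steps n a b"
    using False by (auto simp: cw_steps_def cyc_succ_def)
  then show ?thesis using cyclic_graph_arc[OF cg e] by blast
qed (use e in simp)

section \<open>Closed walks\<close>

definition nontrivial_closed_walk :: "nat \<Rightarrow> (nat \<Rightarrow> nat \<Rightarrow> bool) \<Rightarrow> nat \<Rightarrow> (nat \<Rightarrow> nat) \<Rightarrow> bool"
  where "nontrivial_closed_walk m E N x \<longleftrightarrow> 0 < N \<and> (\<forall>t\<le>N. x t < m) \<and> x N = x 0 \<and>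
     (\<forall>t<N. x t = x (Suc t) \<or> E (x t) (x (Suc t))) \<and> (\<exists>t<N. x t \<noteq> x (Suc t))"

text \<open>Otherwise the clockwise distance to w drops by each step length, and the tour would have
  total length zero.\<close>

lemma closed_tour_sweeps:
  fixes x :: "nat \<Rightarrow> nat"
  assumes x: "\<forall>t\<le>N. x t < n" and closed: "x N = x 0" and moves: "\<exists>t<N. x t \<noteq> x (Suc t)"
    and w: "w < n"
  shows "\<exists>t<N. cw_steps n (x t) w < cw_steps n (x t) (x (Suc t))"
proof (rule ccontr)
  assume "\<not> ?thesis"
  then have short: "\<forall>t<N. cw_steps n (x t) (x (Suc t)) \<le> cw_steps n (x t) w" by auto
  have remaining: "cw_steps n (x t) w + (\<Sum>u<t. cw_steps n (x u) (x (Suc u))) = cw_steps n (x 0) w"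
    if "t \<le> N" for t
    using that
  proof (induction t)
    case (Suc t)
    then show ?case using cw_steps_split[of "x t" n "x (Suc t)" w] x w short by simp
  qed simp
  from remaining[of N] closed have "(\<Sum>u<N. cw_steps n (x u) (x (Suc u))) = 0" by simp
  then have "\<forall>u<N. x u = x (Suc u)" using x cw_steps_eq_0_iff by simp
  then show False using moves by blast
qed

lemma nontrivial_closed_walk_crossing_edge:
  assumes walk: "nontrivial_closed_walk m E N x" and w: "w < m"
  obtains t where "t < N" "E (x t) (x (Suc t))" "w = x t \<or> 0 < cw_steps m (x t) w \<and>
    cw_steps m (x t) w < cw_steps m (x t) (x (Suc t))"
proof -
  have x: "\<forall>t\<le>N. x t < m" and steps: "\<forall>t<N. x t = x (Suc t) \<or> E (x t) (x (Suc t))"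
    using walk unfolding nontrivial_closed_walk_def by auto
  obtain t where t: "t < N" "cw_steps m (x t) w < cw_steps m (x t) (x (Suc t))"
    using closed_tour_sweeps[of N x m w] walk w unfolding nontrivial_closed_walk_def by blast
  then have "x t \<noteq> x (Suc t)" by (auto simp: cw_steps_def)
  then have "E (x t) (x (Suc t))" using steps t(1) by blast
  moreover have "w = x t \<or> 0 < cw_steps m (x t) w"
    using cw_steps_eq_0_iff[of "x t" m w] x t(1) w by auto
  ultimately show ?thesis using that t by blast
qed

lemma nontrivial_closed_walk_succ_edges:
  assumes cg: "cyclic_graph m E" and walk: "nontrivial_closed_walk m E N x" and w: "w < m"
  shows "E w (cyc_succ m w)"
proof -
  obtain t where t: "E (x t) (x (Suc t))" "w = x t \<or> 0 < cw_steps m (x t) w \<and>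
      cw_steps m (x t) w < cw_steps m (x t) (x (Suc t))"
    using nontrivial_closed_walk_crossing_edge[OF walk w] .
  then have "w = x t \<or> E w (x (Suc t))" using cyclic_graph_arc[OF cg _ w] by blast
  then show ?thesis using cyclic_graph_succ_edge[OF cg] t(1) by blast
qed

lemma has_dcycle_nontrivial_closed_walk:
  assumes cg: "cyclic_graph n E" and cycle: "has_dcycle n E"
  obtains N x where "nontrivial_closed_walk n E N x"
proof -
  obtain s :: nat and v :: "nat \<Rightarrow> nat"
    where s: "0 < s" and v: "\<forall>i<s. v i < n \<and> E (v i) (v ((i + 1) mod s))"
    using cycle unfolding has_dcycle_def by blast
  define x where "x t = v (t mod s)" for t
  have edges: "E (x t) (x (Suc t))" if "t < s" for t
    using v that unfolding x_def by simp
  have "nontrivial_closed_walk n E s x"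
    unfolding nontrivial_closed_walk_def
  proof (intro conjI)
    show "\<forall>t\<le>s. x t < n" using v s unfolding x_def by simp
    show "x s = x 0" unfolding x_def by simp
    show "\<forall>t<s. x t = x (Suc t) \<or> E (x t) (x (Suc t))" using edges by blast
    show "\<exists>t<s. x t \<noteq> x (Suc t)" using cyclic_graph_edgeD[OF cg edges[OF s]] s by blast
  qed (rule s)
  then show ?thesis using that by blast
qed

lemma cyclic_graph_has_dcycle_iff:
  assumes cg: "cyclic_graph n E"
  shows "has_dcycle n E \<longleftrightarrow> 0 < n \<and> (\<forall>w<n. E w (cyc_succ n w))"
proof
  assume "has_dcycle n E"
  then obtain N x where walk: "nontrivial_closed_walk n E N x"
    using has_dcycle_nontrivial_closed_walk[OF cg] by blast
  then have "x 0 < n" unfolding nontrivial_closed_walk_def by blast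
  then show "0 < n \<and> (\<forall>w<n. E w (cyc_succ n w))"
    using nontrivial_closed_walk_succ_edges[OF cg walk] by simp
next
  assume "0 < n \<and> (\<forall>w<n. E w (cyc_succ n w))"
  then show "has_dcycle n E"
    unfolding has_dcycle_def using cyc_succ_eq_mod by (intro exI[of _ n] exI[of _ id]) auto
qed

lemma nontrivial_closed_walk_has_dcycle:
  assumes cg: "cyclic_graph m E" and walk: "nontrivial_closed_walk m E N x"
  shows "has_dcycle m E"
proof -
  have "x 0 < m" using walk unfolding nontrivial_closed_walk_def by blast
  then have "0 < m" by simp
  moreover have "\<forall>w<m. E w (cyc_succ m w)"
    using nontrivial_closed_walk_succ_edges[OF cg walk] by blast
  ultimately show ?thesis using cyclic_graph_has_dcycle_iff[OF cg] by blast
qed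

text \<open>A vertex with a different image lies on the arc of some step of the walk, which would
  produce edges in both directions between two images.\<close>

lemma nontrivial_closed_walk_image_nonconstant:
  assumes cg: "cyclic_graph m F" and dH: "directed_graph p H"
    and g: "\<forall>v w. F v w \<longrightarrow> g v = g w \<or> H (g v) (g w)"
    and nonconst: "\<exists>a<m. \<exists>b<m. g a \<noteq> g b" and walk: "nontrivial_closed_walk m F N x"
  shows "\<exists>t\<le>N. g (x t) \<noteq> g (x 0)"
proof (rule ccontr)
  assume "\<not> ?thesis"
  then have const: "g (x t) = g (x 0)" if "t \<le> N" for t using that by blast
  obtain w where w: "w < m" "g w \<noteq> g (x 0)"
  proof -
    obtain a b where "a < m" "b < m" "g a \<noteq> g b" using nonconst by blast
    then show ?thesis using that by (cases "g a = g (x 0)") auto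
  qed
  obtain t where t: "t < N" "F (x t) (x (Suc t))" "w = x t \<or> 0 < cw_steps m (x t) w \<and>
      cw_steps m (x t) w < cw_steps m (x t) (x (Suc t))"
    using nontrivial_closed_walk_crossing_edge[OF walk w(1)] .
  have ends: "g (x t) = g (x 0)" "g (x (Suc t)) = g (x 0)"
    using const[of t] const[of "Suc t"] t(1) by simp_all
  then have "w \<noteq> x t" using w(2) by blast
  then have "0 < cw_steps m (x t) w" "cw_steps m (x t) w < cw_steps m (x t) (x (Suc t))"
    using t(3) by blast+
  then have "F (x t) w" "F w (x (Suc t))" using cyclic_graph_arc[OF cg t(2) w(1)] by blast+
  then have "g (x t) = g w \<or> H (g (x t)) (g w)" "g w = g (x (Suc t)) \<or> H (g w) (g (x (Suc t)))"
    using g by blast+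
  then have "H (g (x 0)) (g w)" "H (g w) (g (x 0))" using ends w(2) by auto
  then show False using dH unfolding directed_graph_def by blast
qed

section \<open>Subintervals and cyclic monotone maps\<close>

definition alternating :: "nat \<Rightarrow> nat set \<Rightarrow> bool" where
  "alternating n A \<longleftrightarrow> (\<exists>a b c d. a < b \<and> b < c \<and> c < d \<and> d < n \<and>
     (a \<in> A \<and> c \<in> A \<and> b \<notin> A \<and> d \<notin> A \<or> a \<notin> A \<and> c \<notin> A \<and> b \<in> A \<and> d \<in> A))"

text \<open>The chord from p to r separates q from s.\<close>

definition separates :: "nat \<Rightarrow> nat \<Rightarrow> nat \<Rightarrow> nat \<Rightarrow> bool" where
  "separates p r q s \<longleftrightarrow> cbetw p q r \<noteq> cbetw p s r"

lemma cbetw_asym: "cbetw x y z \<Longrightarrow> \<not> cbetw x z y"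
  unfolding cbetw_def by auto

lemma cbetw_total: "x \<noteq> y \<Longrightarrow> y \<noteq> z \<Longrightarrow> x \<noteq> z \<Longrightarrow> cbetw x y z \<or> cbetw x z y"
  unfolding cbetw_def by auto

lemma subinterval_not_separates:
  assumes J: "subinterval n J" and bounds: "p < n" "q < n" "r < n" "s < n"
    and split: "p \<in> J \<and> r \<in> J \<and> q \<notin> J \<and> s \<notin> J \<or> p \<notin> J \<and> r \<notin> J \<and> q \<in> J \<and> s \<in> J"
  shows "\<not> separates p r q s"
  using J unfolding subinterval_def
proof (elim disjE exE conjE)
  fix i j assume "J = {i..j}"
  then show ?thesis using split unfolding separates_def cbetw_def by auto
next
  fix i j assume "J = {j..<n} \<union> {0..i}"
  then show ?thesis using split bounds unfolding separates_def cbetw_def by auto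
qed (use split in simp)

lemma order_convex_eq_atLeastAtMost:
  fixes A :: "nat set"
  assumes "finite A" "A \<noteq> {}"
    and convex: "\<And>x y z. x < y \<Longrightarrow> y < z \<Longrightarrow> x \<in> A \<Longrightarrow> z \<in> A \<Longrightarrow> y \<in> A"
  shows "A = {Min A..Max A}"
proof
  show "A \<subseteq> {Min A..Max A}" using assms(1) by auto
  have ends: "Min A \<in> A" "Max A \<in> A" using assms(1,2) by auto
  show "{Min A..Max A} \<subseteq> A"
  proof
    fix y assume y: "y \<in> {Min A..Max A}"
    show "y \<in> A"
    proof (cases "y = Min A \<or> y = Max A")
      case False
      then have "Min A < y" "y < Max A" using y by auto
      then show ?thesis using convex ends by blast
    qed (use ends in auto)
  qed
qed

lemma not_alternating_complement_convex:
  assumes not_alt: "\<not> alternating n A" and xyz: "x < y" "y < z" "z < n" "x \<in> A" "z \<in> A" "y \<notin> A"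
    and uvw: "u < v" "v < w" "u \<in> {..<n} - A" "w \<in> {..<n} - A"
  shows "v \<in> {..<n} - A"
proof (rule ccontr)
  assume "v \<notin> {..<n} - A"
  then have v: "v \<in> A" using uvw by auto
  then have "y \<noteq> v" using xyz by blast
  then consider "y < v" | "v < y" by linarith
  then show False
  proof cases
    case 1
    then have "x < y \<and> y < v \<and> v < w \<and> w < n \<and> x \<in> A \<and> v \<in> A \<and> y \<notin> A \<and> w \<notin> A"
      using xyz uvw v by simp
    then show False using not_alt unfolding alternating_def by blast
  next
    case 2
    then have "u < v \<and> v < y \<and> y < z \<and> z < n \<and> u \<notin> A \<and> y \<notin> A \<and> v \<in> A \<and> z \<in> A"
      using xyz uvw v by simp
    then show False using not_alt unfolding alternating_def by blast
  qed
qed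

text \<open>Either A or its complement in {..<n} is order-convex; in the second case A wraps around
  the end of the cycle.\<close>

lemma not_alternating_subinterval:
  assumes A: "A \<subseteq> {..<n}" and not_alt: "\<not> alternating n A"
  shows "subinterval n A"
proof (cases "\<forall>x y z. x < y \<longrightarrow> y < z \<longrightarrow> x \<in> A \<longrightarrow> z \<in> A \<longrightarrow> y \<in> A")
  case True
  show ?thesis
  proof (cases "A = {}")
    case False
    have "finite A" using A finite_subset by blast
    then have "A = {Min A..Max A}" "Min A \<le> Max A" "Max A < n"
      using order_convex_eq_atLeastAtMost[OF _ False] True False A by auto
    then show ?thesis unfolding subinterval_def by blast
  qed (simp add: subinterval_def)
next
  case False
  then obtain x y z where xyz: "x < y" "y < z" "x \<in> A" "z \<in> A" "y \<notin> A" by blast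
  have z: "z < n" using xyz A by auto
  define B where "B = {..<n} - A"
  have "y \<in> B" using xyz z B_def by auto
  then have "B = {Min B..Max B}"
    using not_alternating_complement_convex[OF not_alt xyz(1,2) z xyz(3-5)]
    by (intro order_convex_eq_atLeastAtMost) (auto simp: B_def)
  then obtain p q where B: "B = {p..q}" by blast
  have "x \<notin> B" "z \<notin> B" using xyz unfolding B_def by auto
  then have "x < p" "q < z" using B xyz \<open>y \<in> B\<close> by auto
  have A_iff: "v \<in> A \<longleftrightarrow> v < n \<and> v \<notin> {p..q}" for v
  proof -
    have "v \<in> {p..q} \<longleftrightarrow> v < n \<and> v \<notin> A" unfolding B[symmetric] B_def by simp
    then show ?thesis using A by auto
  qed
  have "A = {q + 1..<n} \<union> {0..p - 1}" "p - 1 < q + 1" "q + 1 < n"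
    using z B \<open>y \<in> B\<close> \<open>x < p\<close> \<open>q < z\<close> by (auto simp: A_iff)
  then show ?thesis unfolding subinterval_def by blast
qed

text \<open>Reflection implies preservation since cbetw is total and asymmetric on distinct points.\<close>

lemma cyclic_monotone_cbetw_iff:
  assumes f: "cyclic_monotone n m f" and "s < n" "s' < n" "s'' < n"
    and distinct: "f s \<noteq> f s'" "f s' \<noteq> f s''" "f s \<noteq> f s''"
  shows "cbetw (f s) (f s') (f s'') \<longleftrightarrow> cbetw s s' s''"
proof
  show "cbetw (f s) (f s') (f s'') \<Longrightarrow> cbetw s s' s''"
    using f assms(2-4) unfolding cyclic_monotone_def by blast
  assume "cbetw s s' s''"
  moreover have "cbetw (f s) (f s'') (f s') \<Longrightarrow> cbetw s s'' s'"
    using f assms(2-4) unfolding cyclic_monotone_def by blast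
  ultimately show "cbetw (f s) (f s') (f s'')"
    using cbetw_total[OF distinct(1,2,3)] cbetw_asym by blast
qed

lemma alternating_obtains_separates:
  assumes "alternating n A"
  obtains p q r s where "p < n" "q < n" "r < n" "s < n" "separates p r q s"
    "p \<in> A" "r \<in> A" "q \<notin> A" "s \<notin> A"
proof -
  obtain a b c d where abcd: "a < b" "b < c" "c < d" "d < n"
    and pattern: "a \<in> A \<and> c \<in> A \<and> b \<notin> A \<and> d \<notin> A \<or> a \<notin> A \<and> c \<notin> A \<and> b \<in> A \<and> d \<in> A"
    using assms unfolding alternating_def by blast
  have "separates a c b d" "separates b d c a"
    using abcd unfolding separates_def cbetw_def by auto
  then show ?thesis using that[of a b c d] that[of b c d a] pattern abcd by auto
qed

text \<open>Four alternating points of the preimage would have images alternating in and out of J;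
  equal images are excluded because fibres are subintervals, and distinct ones because the
  alternation transfers to the images.\<close>

lemma cyclic_monotone_preimage_subinterval:
  assumes f: "cyclic_monotone n m f" and range: "\<forall>x<n. f x < m" and J: "subinterval m J"
  shows "subinterval n {x. x < n \<and> f x \<in> J}" (is "subinterval n ?P")
proof (rule not_alternating_subinterval)
  show "\<not> alternating n ?P"
  proof
    assume "alternating n ?P"
    then obtain p q r s where pqrs: "p < n" "q < n" "r < n" "s < n" "separates p r q s"
      and "p \<in> ?P" "r \<in> ?P" "q \<notin> ?P" "s \<notin> ?P"
      by (rule alternating_obtains_separates)
    then have fJ: "f p \<in> J" "f r \<in> J" "f q \<notin> J" "f s \<notin> J" by auto
    have fiber: "subinterval n {x. x < n \<and> f x = f y}" if "y < n" for y
      using f range that unfolding cyclic_monotone_def by blast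
    have "f p \<noteq> f r"
    proof
      assume "f p = f r"
      have "\<not> separates p r q s"
        by (rule subinterval_not_separates[OF fiber[OF pqrs(1)] pqrs(1-4)])
          (use \<open>f p = f r\<close> pqrs fJ in auto)
      then show False using pqrs(5) by blast
    qed
    moreover have "f q \<noteq> f s"
    proof
      assume "f q = f s"
      have "\<not> separates p r q s"
        by (rule subinterval_not_separates[OF fiber[OF pqrs(2)] pqrs(1-4)])
          (use \<open>f q = f s\<close> pqrs fJ in auto)
      then show False using pqrs(5) by blast
    qed
    moreover have "f p \<noteq> f q" "f p \<noteq> f s" "f r \<noteq> f q" "f r \<noteq> f s" using fJ by auto
    ultimately have "separates (f p) (f r) (f q) (f s)"
      using pqrs(5) cyclic_monotone_cbetw_iff[OF f] pqrs(1-4) unfolding separates_def by metis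
    moreover have "f p < m" "f q < m" "f r < m" "f s < m" using range pqrs by auto
    ultimately show False using subinterval_not_separates[OF J] fJ by blast
  qed
qed auto

lemma cyclic_monotone_comp:
  assumes f: "cyclic_monotone n m f" and range: "\<forall>x<n. f x < m" and g: "cyclic_monotone m p g"
  shows "cyclic_monotone n p (g \<circ> f)"
  unfolding cyclic_monotone_def
proof (intro conjI allI impI)
  fix y assume "y < p"
  then have "subinterval m {z. z < m \<and> g z = y}" using g unfolding cyclic_monotone_def by blast
  then have "subinterval n {x. x < n \<and> f x \<in> {z. z < m \<and> g z = y}}"
    by (rule cyclic_monotone_preimage_subinterval[OF f range])
  moreover have "{x. x < n \<and> f x \<in> {z. z < m \<and> g z = y}} = {x. x < n \<and> (g \<circ> f) x = y}"
    using range by auto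
  ultimately show "subinterval n {x. x < n \<and> (g \<circ> f) x = y}" by simp
next
  fix s s' s'' assume s: "s < n" "s' < n" "s'' < n"
    and "cbetw ((g \<circ> f) s) ((g \<circ> f) s') ((g \<circ> f) s'')"
  then have "cbetw (f s) (f s') (f s'')" using g range unfolding cyclic_monotone_def by simp
  then show "cbetw s s' s''" using f s unfolding cyclic_monotone_def by blast
qed

section \<open>Cyclic homomorphisms\<close>

lemma cyclic_graph_Cnk:
  assumes "2 * k < n" shows "cyclic_graph n (Cnk n k)"
proof -
  have "\<not> Cnk n k j i" if "Cnk n k i j" for i j
  proof
    assume "Cnk n k j i"
    with that have "i < n" "j < n" "i \<noteq> j" "cw_steps n i j \<le> k" "cw_steps n j i \<le> k"
      by (auto simp: Cnk_iff_cw_steps)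
    then show False using cw_steps_swap[of i n j] assms by linarith
  qed
  then have "directed_graph n (Cnk n k)"
    unfolding directed_graph_def by (auto simp: Cnk_iff_cw_steps)
  moreover have "j = cyc_succ n i \<or> Cnk n k i (cyc_pred n j) \<and> Cnk n k (cyc_succ n i) j"
    if "Cnk n k i j" for i j
    using that unfolding Cnk_iff_cw_steps
    by (auto simp: cw_steps_def cyc_succ_def cyc_pred_def split: if_splits)
  ultimately show ?thesis
    unfolding cyclic_graph_def using cyc_succ_eq_mod cyc_pred_eq_mod Cnk_iff_cw_steps by metis
qed

lemma Cnk_has_dcycle:
  assumes "0 < k" "2 * k < n" shows "has_dcycle n (Cnk n k)"
proof -
  have "cw_steps n w (cyc_succ n w) = 1" if "w < n" for w
    using that assms by (auto simp: cw_steps_def cyc_succ_def)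
  then have "\<forall>w<n. Cnk n k w (cyc_succ n w)"
    using assms by (auto simp: Cnk_iff_cw_steps cyc_succ_def)
  then show ?thesis using cyclic_graph_has_dcycle_iff[OF cyclic_graph_Cnk[OF assms(2)]] assms
    by simp
qed

lemma exists_mod_step_ne:
  assumes "\<exists>a<n. \<exists>b<n. f a \<noteq> f b"
  shows "\<exists>t<n. f (t mod n) \<noteq> f (Suc t mod n)"
proof (rule ccontr)
  assume "\<not> ?thesis"
  then have step: "f (t mod n) = f (Suc t mod n)" if "t < n" for t
    using that by blast
  have "f (t mod n) = f 0" if "t < n" for t
    using that
  proof (induction t)
    case (Suc t)
    then show ?case using step[of t] by simp
  qed simp
  then show False using assms by (metis mod_less)
qed

lemma cyclic_hom_closed_walk:
  assumes cg: "cyclic_graph n E" and cycle: "has_dcycle n E" and f: "cyclic_hom n E m F f"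
  shows "nontrivial_closed_walk m F n (\<lambda>t. f (t mod n))"
proof -
  have n: "0 < n" and succ: "\<forall>w<n. E w (cyc_succ n w)"
    using cyclic_graph_has_dcycle_iff[OF cg] cycle by auto
  have range: "\<forall>x<n. f x < m" and edges: "\<forall>v w. E v w \<longrightarrow> f v = f w \<or> F (f v) (f w)"
    and nonconst: "\<exists>a<n. \<exists>b<n. f a \<noteq> f b"
    using f cycle unfolding cyclic_hom_def by blast+
  have "E (t mod n) (Suc t mod n)" for t
    using succ[rule_format, of "t mod n"] n cyc_succ_eq_mod[of "t mod n" n] by (simp add: mod_Suc_eq)
  then have "\<forall>t<n. f (t mod n) = f (Suc t mod n) \<or> F (f (t mod n)) (f (Suc t mod n))"
    using edges by blast
  then show ?thesis unfolding nontrivial_closed_walk_def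
    using n range exists_mod_step_ne[OF nonconst] by simp
qed

lemma cyclic_hom_id:
  assumes "2 \<le> n" and "\<forall>v w. E v w \<longrightarrow> F v w"
  shows "cyclic_hom n E n F id"
proof -
  have "subinterval n {x. x < n \<and> id x = y}" if "y < n" for y
  proof -
    have "{x. x < n \<and> id x = y} = {y..y}" using that by auto
    then show ?thesis unfolding subinterval_def using that by blast
  qed
  then have "cyclic_monotone n n id" unfolding cyclic_monotone_def by simp
  moreover have "\<exists>a<n. \<exists>b<n. id a \<noteq> id b"
    using assms(1) by (intro exI[of _ 0] conjI exI[of _ 1]) auto
  ultimately show ?thesis unfolding cyclic_hom_def using assms(2) by auto
qed

lemma cyclic_hom_comp:
  assumes cgE: "cyclic_graph n E" and cgF: "cyclic_graph m F" and dH: "directed_graph p H"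
    and f: "cyclic_hom n E m F f" and g: "cyclic_hom m F p H g"
  shows "cyclic_hom n E p H (g \<circ> f)"
proof -
  have f_range: "\<forall>x<n. f x < m" and f_mono: "cyclic_monotone n m f"
    and f_edges: "\<forall>v w. E v w \<longrightarrow> f v = f w \<or> F (f v) (f w)"
    using f unfolding cyclic_hom_def by blast+
  have g_range: "\<forall>x<m. g x < p" and g_mono: "cyclic_monotone m p g"
    and g_edges: "\<forall>v w. F v w \<longrightarrow> g v = g w \<or> H (g v) (g w)"
    and g_nonconst: "has_dcycle m F \<longrightarrow> (\<exists>a<m. \<exists>b<m. g a \<noteq> g b)"
    using g unfolding cyclic_hom_def by blast+
  have "\<forall>v w. E v w \<longrightarrow> (g \<circ> f) v = (g \<circ> f) w \<or> H ((g \<circ> f) v) ((g \<circ> f) w)"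
    using f_edges g_edges by fastforce
  moreover have "\<exists>a<n. \<exists>b<n. (g \<circ> f) a \<noteq> (g \<circ> f) b" if cycle: "has_dcycle n E"
  proof -
    have walk: "nontrivial_closed_walk m F n (\<lambda>t. f (t mod n))"
      using cyclic_hom_closed_walk[OF cgE cycle f] .
    then have "\<exists>a<m. \<exists>b<m. g a \<noteq> g b"
      using g_nonconst nontrivial_closed_walk_has_dcycle[OF cgF] by blast
    then obtain t where "g (f (t mod n)) \<noteq> g (f (0 mod n))"
      using nontrivial_closed_walk_image_nonconstant[OF cgF dH g_edges _ walk] by blast
    moreover have "0 < n" using walk unfolding nontrivial_closed_walk_def by blast
    ultimately show ?thesis by (metis comp_apply mod_less_divisor)
  qed
  ultimately show ?thesis
    using f_range g_range cyclic_monotone_comp[OF f_mono f_range g_mono]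
    unfolding cyclic_hom_def by simp
qed

section \<open>Winding of periodic point sequences on the circle\<close>

lemma periodic_sum_shift:
  fixes g :: "nat \<Rightarrow> real"
  assumes period: "\<And>t. g (t + n) = g t"
  shows "(\<Sum>t<n. g (t + u)) = (\<Sum>t<n. g t)"
proof (induction u)
  case (Suc u)
  have "(\<Sum>t<Suc n. g (t + u)) = g u + (\<Sum>t<n. g (Suc t + u))"
    by (subst sum.lessThan_Suc_shift) simp
  moreover have "(\<Sum>t<Suc n. g (t + u)) = (\<Sum>t<n. g (t + u)) + g u"
    using period[of u] by (simp add: add.commute)
  ultimately show ?case using Suc by simp
qed simp

lemma frac_diff_pos:
  fixes u v :: real
  assumes "0 \<le> u" "u < 1" "0 \<le> v" "v < 1" "u \<noteq> v"
  shows "0 < frac (v - u)"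
proof -
  have "v - u \<notin> \<int>"
  proof
    assume "v - u \<in> \<int>"
    then obtain z where z: "v - u = of_int z" by (auto elim: Ints_cases)
    then have "-1 < z" "z < 1" using assms by linarith+
    then show False using z assms(5) by simp
  qed
  then show ?thesis using frac_ge_0 by (metis frac_eq_0_iff less_eq_real_def)
qed

lemma sum_frac_increments_integer:
  fixes a :: "nat \<Rightarrow> real"
  shows "(\<Sum>u<j. frac (a (Suc (t + u)) - a (t + u))) - (a (t + j) - a t) \<in> \<int>"
proof (induction j)
  case (Suc j)
  have split: "(\<Sum>u<Suc j. frac (a (Suc (t + u)) - a (t + u))) - (a (t + Suc j) - a t) =
      ((\<Sum>u<j. frac (a (Suc (t + u)) - a (t + u))) - (a (t + j) - a t)) +
      (frac (a (Suc (t + j)) - a (t + j)) - (a (Suc (t + j)) - a (t + j)))"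
    by simp
  have "frac (a (Suc (t + j)) - a (t + j)) - (a (Suc (t + j)) - a (t + j)) \<in> \<int>"
    unfolding frac_def by simp
  then show ?case unfolding split by (rule Ints_add[OF Suc.IH])
qed simp

text \<open>The partial sums stay below 2 \<rho> < 1, so they never wrap around the circle.\<close>

lemma sum_frac_increments_short:
  fixes a :: "nat \<Rightarrow> real"
  assumes short: "\<And>t j. 0 < j \<Longrightarrow> j \<le> k \<Longrightarrow> frac (a (t + j) - a t) \<le> \<rho>"
    and \<rho>: "\<rho> < 1/2" and j: "j \<le> k"
  shows "(\<Sum>u<j. frac (a (Suc (t + u)) - a (t + u))) = frac (a (t + j) - a t)"
  using j
proof (induction j)
  case (Suc j)
  let ?S = "\<Sum>u<Suc j. frac (a (Suc (t + u)) - a (t + u))"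
  have "0 \<le> \<rho>" using short[of 1 t] Suc.prems frac_ge_0[of "a (t + 1) - a t"] by linarith
  have "?S = frac (a (t + j) - a t) + frac (a (Suc (t + j)) - a (t + j))"
    using Suc by simp
  also have "\<dots> \<le> \<rho> + \<rho>"
  proof (rule add_mono)
    show "frac (a (t + j) - a t) \<le> \<rho>"
      using short[of j t] Suc.prems \<open>0 \<le> \<rho>\<close> by (cases "j = 0") auto
    show "frac (a (Suc (t + j)) - a (t + j)) \<le> \<rho>"
      using short[of 1 "t + j"] Suc.prems by simp
  qed
  finally have "?S < 1" using \<rho> by simp
  moreover have "0 \<le> ?S" by (simp add: sum_nonneg)
  moreover have "a (t + Suc j) - a t - ?S \<in> \<int>"
    using Ints_minus[OF sum_frac_increments_integer[where j = "Suc j" and a = a and t = t]]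
    by simp
  ultimately have "frac (a (t + Suc j) - a t) = ?S" by (simp add: frac_unique_iff)
  then show ?case by simp
qed simp

lemma periodic_winding_bound:
  fixes a :: "nat \<Rightarrow> real"
  assumes period: "\<And>t. a (t + n) = a t" and range: "\<And>t. 0 \<le> a t \<and> a t < 1"
    and moves: "\<exists>t<n. a t \<noteq> a (Suc t)" and k: "0 < k"
    and short: "\<And>t j. 0 < j \<Longrightarrow> j \<le> k \<Longrightarrow> frac (a (t + j) - a t) \<le> \<rho>"
    and \<rho>: "\<rho> < 1/2"
  shows "real k \<le> real n * \<rho>"
proof -
  define d where "d t = frac (a (Suc t) - a t)" for t
  define W where "W = (\<Sum>t<n. d t)"
  have "W - (a (0 + n) - a 0) \<in> \<int>"
    unfolding W_def d_def using sum_frac_increments_integer[where j = n and a = a and t = 0]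
    by simp
  then have "W \<in> \<int>" using period[of 0] by simp
  then obtain z where z: "W = of_int z" by (auto elim: Ints_cases)
  obtain t where t: "t < n" "a t \<noteq> a (Suc t)" using moves by blast
  then have "0 < d t" unfolding d_def using range frac_diff_pos by metis
  also have "d t \<le> W" unfolding W_def using t(1) by (intro member_le_sum) (auto simp: d_def)
  finally have "1 \<le> W" using z by simp
  have window: "(\<Sum>u<k. d (t + u)) \<le> \<rho>" for t
    using sum_frac_increments_short[OF short \<rho>, where j = k and t = t] short[OF k, of t]
    unfolding d_def by simp
  have "d (t + n) = d t" for t unfolding d_def using period[of t] period[of "Suc t"] by simp
  then have "real k * W = (\<Sum>u<k. \<Sum>t<n. d (t + u))"
    unfolding W_def using periodic_sum_shift[of d n] by simp
  also have "\<dots> = (\<Sum>t<n. \<Sum>u<k. d (t + u))" by (rule sum.swap)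
  also have "\<dots> \<le> real n * \<rho>" using sum_mono[of "{..<n}", OF window] by simp
  finally have "real k * W \<le> real n * \<rho>" .
  moreover have "real k * 1 \<le> real k * W" using \<open>1 \<le> W\<close> by (intro mult_left_mono) auto
  ultimately show ?thesis by simp
qed

lemma cyclic_hom_Cnk_winding_bound:
  fixes p :: "nat \<Rightarrow> real"
  assumes range: "\<forall>i<m. 0 \<le> p i \<and> p i < 1" and inj: "inj_on p {..<m}"
    and short_edges: "\<forall>v w. F v w \<longrightarrow> cw_dist (p v) (p w) \<le> \<rho>"
    and \<rho>: "0 \<le> \<rho>" "\<rho> < 1/2" and f: "cyclic_hom n (Cnk n k) m F f" and nk: "2 * k < n"
  shows "real k \<le> real n * \<rho>"
proof (cases "k = 0")
  case False
  define a where "a t = p (f (t mod n))" for t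
  have n: "0 < n" using nk by simp
  have f_range: "\<forall>x<n. f x < m" and f_edges: "\<forall>v w. Cnk n k v w \<longrightarrow> f v = f w \<or> F (f v) (f w)"
    using f unfolding cyclic_hom_def by blast+
  have "nontrivial_closed_walk m F n (\<lambda>t. f (t mod n))"
    using cyclic_hom_closed_walk[OF cyclic_graph_Cnk[OF nk] Cnk_has_dcycle[OF _ nk] f] False
    by simp
  then obtain t where t: "t < n" "f (t mod n) \<noteq> f (Suc t mod n)"
    unfolding nontrivial_closed_walk_def by blast
  then have "a t \<noteq> a (Suc t)"
    unfolding a_def using inj f_range n by (simp add: inj_on_eq_iff)
  then have moves: "\<exists>t<n. a t \<noteq> a (Suc t)" using t(1) by blast
  have short: "frac (a (t + j) - a t) \<le> \<rho>" if "0 < j" "j \<le> k" for t j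
  proof -
    have "Cnk n k (t mod n) ((t + j) mod n)" using that nk by (rule Cnk_mod_add)
    then have "f (t mod n) = f ((t + j) mod n) \<or> F (f (t mod n)) (f ((t + j) mod n))"
      using f_edges by blast
    then show ?thesis unfolding a_def using short_edges \<rho>(1) by (auto simp: cw_dist_def)
  qed
  have "a (t + n) = a t" "0 \<le> a t \<and> a t < 1" for t
    unfolding a_def using range f_range n by auto
  then show ?thesis
    using periodic_winding_bound[OF _ _ moves _ short \<rho>(2)] False by blast
qed (use \<rho> in simp)

section \<open>The winding fraction\<close>

lemma wf_set_bdd_above:
  "bdd_above ({real k / real n | n k. 2 * k < n \<and> (\<exists>f. cyclic_hom n (Cnk n k) m F f)} \<union> {0})"
proof (rule bdd_aboveI[of _ "1/2"])
  fix x assume "x \<in> {real k / real n | n k. 2 * k < n \<and> (\<exists>f. cyclic_hom n (Cnk n k) m F f)} \<union> {0}"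
  then consider "x = 0" | n k where "x = real k / real n" "2 * k < n" by blast
  then show "x \<le> 1/2"
  proof cases
    case (2 n k)
    then have "2 * real k \<le> real n" "0 < real n" by linarith+
    then show ?thesis unfolding 2 by (simp add: divide_simps)
  qed simp
qed

lemma wf_nonneg: "0 \<le> wf m F"
  unfolding wf_def by (rule cSup_upper[OF _ wf_set_bdd_above]) simp

lemma wf_upper:
  assumes "2 * k < n" "cyclic_hom n (Cnk n k) m F f"
  shows "real k / real n \<le> wf m F"
  unfolding wf_def by (rule cSup_upper[OF _ wf_set_bdd_above]) (use assms in blast)

lemma wf_least:
  assumes "0 \<le> \<rho>"
    and bound: "\<And>n k f. 2 * k < n \<Longrightarrow> cyclic_hom n (Cnk n k) m F f \<Longrightarrow> real k \<le> real n * \<rho>"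
  shows "wf m F \<le> \<rho>"
  unfolding wf_def
proof (rule cSup_least)
  fix x assume "x \<in> {real k / real n | n k. 2 * k < n \<and> (\<exists>f. cyclic_hom n (Cnk n k) m F f)} \<union> {0}"
  then consider "x = 0" | n k f where "x = real k / real n" "2 * k < n" "cyclic_hom n (Cnk n k) m F f"
    by blast
  then show "x \<le> \<rho>"
  proof cases
    case (2 n k f)
    then have "real k \<le> real n * \<rho>" "0 < real n" using bound by auto
    then show ?thesis unfolding 2 by (simp add: divide_simps mult.commute)
  qed (use assms(1) in simp)
qed simp

lemma wf_mono:
  assumes "\<And>n k f. 2 * k < n \<Longrightarrow> cyclic_hom n (Cnk n k) m F f \<Longrightarrow> \<exists>g. cyclic_hom n (Cnk n k) m' F' g"
  shows "wf m F \<le> wf m' F'"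
  unfolding wf_def
proof (rule cSup_subset_mono)
  show "bdd_above ({real k / real n | n k. 2 * k < n \<and> (\<exists>f. cyclic_hom n (Cnk n k) m' F' f)} \<union> {0})"
    by (rule wf_set_bdd_above)
qed (use assms in blast)+

lemma wf_mono_edges:
  assumes "\<forall>v w. F v w \<longrightarrow> F' v w" shows "wf m F \<le> wf m F'"
proof (rule wf_mono)
  fix n k f assume "cyclic_hom n (Cnk n k) m F f"
  then have "cyclic_hom n (Cnk n k) m F' f" using assms unfolding cyclic_hom_def by meson
  then show "\<exists>g. cyclic_hom n (Cnk n k) m F' g" by blast
qed

lemma wf_pos_obtains_hom:
  assumes "0 < wf m F"
  obtains n k f where "0 < k" "2 * k < n" "cyclic_hom n (Cnk n k) m F f"
proof -
  have "\<not> wf m F \<le> 0" using assms by simp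
  then show ?thesis using that wf_least[of 0 m F] by fastforce
qed

lemma wf_le_of_short_edges:
  fixes p :: "nat \<Rightarrow> real"
  assumes "\<forall>i<m. 0 \<le> p i \<and> p i < 1" "inj_on p {..<m}"
    and "\<forall>v w. F v w \<longrightarrow> cw_dist (p v) (p w) \<le> \<rho>" and "0 \<le> \<rho>" "\<rho> < 1/2"
  shows "wf m F \<le> \<rho>"
  using wf_least cyclic_hom_Cnk_winding_bound[OF assms] assms(4) by blast

lemma wf_pos_iff_has_dcycle:
  assumes cg: "cyclic_graph n E"
  shows "0 < wf n E \<longleftrightarrow> has_dcycle n E"
proof
  assume "0 < wf n E"
  then obtain N k f where k: "0 < k" "2 * k < N" and f: "cyclic_hom N (Cnk N k) n E f"
    by (rule wf_pos_obtains_hom)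
  have "nontrivial_closed_walk n E N (\<lambda>t. f (t mod N))"
    by (rule cyclic_hom_closed_walk[OF cyclic_graph_Cnk[OF k(2)] Cnk_has_dcycle[OF k] f])
  then show "has_dcycle n E" by (rule nontrivial_closed_walk_has_dcycle[OF cg])
next
  assume "has_dcycle n E"
  then have n: "0 < n" and succ: "\<forall>w<n. E w (cyc_succ n w)"
    using cyclic_graph_has_dcycle_iff[OF cg] by auto
  have "3 \<le> n"
  proof (rule ccontr)
    assume "\<not> 3 \<le> n"
    then have "n = 1 \<or> n = 2" using n by auto
    then have "E 0 0 \<or> E 0 1 \<and> E 1 0"
      using succ[rule_format, of 0] succ[rule_format, of 1] by (auto simp: cyc_succ_def)
    then show False using cyclic_graph_edgeD[OF cg] by blast
  qed
  have "E v w" if "Cnk n 1 v w" for v w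
  proof -
    have "v < n" "w = cyc_succ n v"
      using that by (auto simp: Cnk_iff_cw_steps cw_steps_def cyc_succ_def split: if_splits)
    then show ?thesis using succ by blast
  qed
  then have "cyclic_hom n (Cnk n 1) n E id" using \<open>3 \<le> n\<close> by (intro cyclic_hom_id) auto
  then have "real 1 / real n \<le> wf n E" using \<open>3 \<le> n\<close> by (intro wf_upper) auto
  moreover have "0 < real 1 / real n" using n by simp
  ultimately show "0 < wf n E" by linarith
qed

lemma wf_mono_cyclic_hom:
  assumes "cyclic_graph n E" "cyclic_graph m F" "cyclic_hom n E m F g"
  shows "wf n E \<le> wf m F"
proof (rule wf_mono)
  fix N k f assume "2 * k < N" "cyclic_hom N (Cnk N k) n E f"
  then show "\<exists>h. cyclic_hom N (Cnk N k) m F h"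
    using cyclic_hom_comp cyclic_graph_Cnk assms cyclic_graph_def by blast
qed

lemma sorted_list_of_set_in_unit_interval:
  fixes X :: "real set"
  assumes "finite X" "X \<subseteq> {0..<1}"
  shows "\<forall>i<card X. 0 \<le> sorted_list_of_set X ! i \<and> sorted_list_of_set X ! i < 1"
    and "inj_on (\<lambda>i. sorted_list_of_set X ! i) {..<card X}"
proof -
  have "sorted_list_of_set X ! i \<in> {0..<1}" if "i < card X" for i
    using nth_mem[of i "sorted_list_of_set X"] that assms by auto
  then show "\<forall>i<card X. 0 \<le> sorted_list_of_set X ! i \<and> sorted_list_of_set X ! i < 1"
    by simp
  show "inj_on (\<lambda>i. sorted_list_of_set X ! i) {..<card X}"
    using inj_on_nth[of "sorted_list_of_set X" "{..<card X}"] by simp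
qed

lemma wf_le_le_radius:
  assumes "finite X" "X \<subseteq> {0..<1}" "0 < r" "r < 1/2"
  shows "wf_le X r \<le> r"
  unfolding wf_le_def using assms
  by (intro wf_le_of_short_edges[OF sorted_list_of_set_in_unit_interval[OF assms(1,2)]])
    (auto simp: VR_le_def)

lemma wf_lt_less_radius:
  assumes X: "finite X" "X \<subseteq> {0..<1}" and r: "0 < r" "r < 1/2"
  shows "wf_lt X r < r"
proof -
  define p where "p i = sorted_list_of_set X ! i" for i
  define D where "D = insert 0 ((\<lambda>(v, w). cw_dist (p v) (p w)) ` {(v, w). VR_lt X r v w})"
  have "{(v, w). VR_lt X r v w} \<subseteq> {..<card X} \<times> {..<card X}" by (auto simp: VR_lt_def)
  then have "finite D" unfolding D_def by (simp add: finite_subset)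
  define \<rho> where "\<rho> = Max D"
  have "\<rho> \<in> D" unfolding \<rho>_def using \<open>finite D\<close> by (intro Max_in) (auto simp: D_def)
  then have "\<rho> < r" unfolding D_def VR_lt_def p_def using r by auto
  have "0 \<le> \<rho>" unfolding \<rho>_def using \<open>finite D\<close> by (intro Max_ge) (auto simp: D_def)
  have "cw_dist (p v) (p w) \<le> \<rho>" if "VR_lt X r v w" for v w
    unfolding \<rho>_def using \<open>finite D\<close> that by (intro Max_ge) (auto simp: D_def)
  then have "wf_lt X r \<le> \<rho>" unfolding wf_lt_def
    using wf_le_of_short_edges[OF sorted_list_of_set_in_unit_interval[OF X, folded p_def]] \<open>0 \<le> \<rho>\<close>
      \<open>\<rho> < r\<close> r by auto
  then show ?thesis using \<open>\<rho> < r\<close> by simp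
qed

lemma wf_lt_le_wf_le: "wf_lt X r \<le> wf_le X r"
  unfolding wf_lt_def wf_le_def by (rule wf_mono_edges) (auto simp: VR_lt_def VR_le_def)

lemma wf_Cnk:
  assumes nk: "2 * k < n" shows "wf n (Cnk n k) = real k / real n"
proof (rule antisym)
  have n: "0 < n" using nk by simp
  have "cw_dist (real v / real n) (real w / real n) \<le> real k / real n" if "Cnk n k v w" for v w
    using that cw_dist_index[of v n w] by (auto simp: Cnk_iff_cw_steps divide_right_mono)
  moreover have "real k / real n < 1/2" using nk by (simp add: divide_simps)
  moreover have "inj_on (\<lambda>i. real i / real n) {..<n}" using n by (simp add: inj_on_def)
  ultimately show "wf n (Cnk n k) \<le> real k / real n"
    using n by (intro wf_le_of_short_edges) auto
  show "real k / real n \<le> wf n (Cnk n k)"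
  proof (cases "k = 0")
    case False
    then have "cyclic_hom n (Cnk n k) n (Cnk n k) id" using nk by (intro cyclic_hom_id) auto
    then show ?thesis by (rule wf_upper[OF nk])
  qed (simp add: wf_nonneg)
qed

theorem proposition3p8:
  shows "(\<forall>n E. cyclic_graph n E \<longrightarrow> (wf n E > 0 \<longleftrightarrow> has_dcycle n E))
    \<and> (\<forall>n E m F f. cyclic_graph n E \<and> cyclic_graph m F \<and> cyclic_hom n E m F f
          \<longrightarrow> wf n E \<le> wf m F)
    \<and> (\<forall>(X::real set) (r::real). finite X \<and> X \<subseteq> {0..<1} \<and> 0 < r \<and> r < 1/2 \<longrightarrow>
          wf_le X r \<le> r \<and> wf_lt X r < r \<and> wf_lt X r \<le> wf_le X r)
    \<and> (\<forall>n k::nat. 2 * k < n \<longrightarrow> wf n (Cnk n k) = real k / real n)"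
proof (intro conjI allI impI)
  show "wf n E > 0 \<longleftrightarrow> has_dcycle n E" if "cyclic_graph n E" for n E
    using that by (rule wf_pos_iff_has_dcycle)
  show "wf n E \<le> wf m F"
    if "cyclic_graph n E \<and> cyclic_graph m F \<and> cyclic_hom n E m F f" for n E m F f
    using that wf_mono_cyclic_hom by blast
  fix X :: "real set" and r :: real
  assume "finite X \<and> X \<subseteq> {0..<1} \<and> 0 < r \<and> r < 1/2"
  then show "wf_le X r \<le> r" "wf_lt X r < r"
    using wf_le_le_radius wf_lt_less_radius by blast+
  show "wf_lt X r \<le> wf_le X r" by (rule wf_lt_le_wf_le)
qed (rule wf_Cnk)

end
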